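(* Let $n,p\ge 1$ be integers, let $q\in(0,\infty]$, and let $0\le \sigma\le B$. Then \[ \mathcal{E}_q^*(\sigma,B)\;\le\;\mathcal{E}_q(\sigma,B)\;\le\;16\,\mathcal{E}_q^*(\sigma,B). \]
   Context: For independent random vectors $\boldsymbol{X}_1,\dots,\boldsymbol{X}_n$ in $\mathbb{R}^p$ with joint law $P^n=\prod_{i=1}^n P_i$ and $\mathbb{E}[\boldsymbol{X}_i]=0$ for all $i$, write $X_i(j)$ for the $j$-th coordinate and set $\mathcal{V}(P^n)=\max_{1\le j\le p}\frac1n\sum_{i=1}^n\mathbb{E}[X_i(j)^2]$ and $\mathcal{D}_q(P^n)=\big(\frac1n\sum_{i=1}^n\mathbb{E}[\max_{1\le j\le p}|X_i(j)|^q]\big)^{1/q}$. For $q=\infty$, the constraint $\mathcal{D}_q(P^n)\le B$ means $\mathbb{P}(\max_{1\le i\le n}\|\boldsymbol{X}_i\|_\infty> B)=0$. Define \[ \mathcal{E}_q(\sigma,B)=\sup\Big\{\mathbb{E}_{P^n}\Big[\max_{1\le j\le p}\Big|\frac1n\sum_{i=1}^n X_i(j)\Big|\Big]:\ \mathcal{V}(P^n)\le\sigma^2,\ \mathcal{D}_q(P^n)\le B\Big\}, \] the supremum over all such laws of independent mean-zero random vectors. Let $\mathcal{P}_q(\sigma,B)$ be the set of probability distributions $P$ on $\mathbb{R}^p$ with $\mathbb{E}_P[\boldsymbol{X}]=0$, $\max_{1\le j\le p}\mathbb{E}_P[X(j)^2]\le\sigma^2$ and $(\mathbb{E}_P[\|\boldsymbol{X}\|_\infty^q])^{1/q}\le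 B$, and \[ \mathcal{E}_q^*(\sigma,B)=\sup\Big\{\mathbb{E}_P\Big[\Big\|\frac1n\sum_{i=1}^n\boldsymbol{X}_i\Big\|_\infty\Big]:\ \boldsymbol{X}_1,\dots,\boldsymbol{X}_n\overset{iid}{\sim}P,\ P\in\mathcal{P}_q(\sigma,B)\Big\}. \] *)

theory Defs
  imports "HOL-Probability.Probability"
begin

text \<open>Vectors in R^p are rendered as \<open>real ^ 'p::finite\<close> for a finite index type \<open>'p\<close>
  (so p = CARD('p) \<ge> 1). The parameter q \<in> (0,\<infinity>] is an extended real.\<close>

definition linf :: "real ^ 'p::finite \<Rightarrow> real" where
  "linf x = Max (range (\<lambda>j. \<bar>x $ j\<bar>))"

definition mean_zero :: "(real ^ 'p::finite) measure \<Rightarrow> bool" where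
  "mean_zero P \<longleftrightarrow> (\<forall>j. integrable P (\<lambda>x. x $ j) \<and> (\<integral>x. x $ j \<partial>P) = 0)"

definition is_law :: "(real ^ 'p::finite) measure \<Rightarrow> bool" where
  "is_law P \<longleftrightarrow> prob_space P \<and> sets P = sets borel"

definition V_ok :: "real \<Rightarrow> nat \<Rightarrow> (nat \<Rightarrow> (real ^ 'p::finite) measure) \<Rightarrow> bool" where
  "V_ok \<sigma> n Ps \<longleftrightarrow> (\<forall>j. (\<forall>i<n. integrable (Ps i) (\<lambda>x. (x $ j)^2)) \<and>
       (1 / real n) * (\<Sum>i<n. \<integral>x. (x $ j)^2 \<partial>Ps i) \<le> \<sigma>^2)"

definition D_ok :: "ereal \<Rightarrow> real \<Rightarrow> nat \<Rightarrow> (nat \<Rightarrow> (real ^ 'p::finite) measure) \<Rightarrow> bool" where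
  "D_ok q B n Ps \<longleftrightarrow>
     (if q = \<infinity> then (AE x in PiM {..<n} Ps. \<forall>i<n. linf (x i) \<le> B)
      else (\<forall>i<n. integrable (Ps i) (\<lambda>x. linf x powr real_of_ereal q)) \<and>
           ((1 / real n) * (\<Sum>i<n. \<integral>x. linf x powr real_of_ereal q \<partial>Ps i))
              powr (1 / real_of_ereal q) \<le> B)"

definition E_q :: "'p::finite itself \<Rightarrow> nat \<Rightarrow> ereal \<Rightarrow> real \<Rightarrow> real \<Rightarrow> ennreal" where
  "E_q _ n q \<sigma> B = (SUP Ps \<in> {Ps :: nat \<Rightarrow> (real ^ 'p::finite) measure.
        (\<forall>i<n. is_law (Ps i) \<and> mean_zero (Ps i)) \<and> V_ok \<sigma> n Ps \<and> D_ok q B n Ps}.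
      \<integral>\<^sup>+ x. ennreal (Max (range (\<lambda>j. \<bar>(1 / real n) * (\<Sum>i<n. x i $ j)\<bar>))) \<partial>PiM {..<n} Ps)"

definition P_class :: "ereal \<Rightarrow> real \<Rightarrow> real \<Rightarrow> (real ^ 'p::finite) measure set" where
  "P_class q \<sigma> B = {P. is_law P \<and> mean_zero P \<and>
     (\<forall>j. integrable P (\<lambda>x. (x $ j)^2) \<and> (\<integral>x. (x $ j)^2 \<partial>P) \<le> \<sigma>^2) \<and>
     (if q = \<infinity> then (AE x in P. linf x \<le> B)
      else integrable P (\<lambda>x. linf x powr real_of_ereal q) \<and>
           (\<integral>x. linf x powr real_of_ereal q \<partial>P) powr (1 / real_of_ereal q) \<le> B)}"

definition E_q_star :: "'p::finite itself \<Rightarrow> nat \<Rightarrow> ereal \<Rightarrow> real \<Rightarrow> real \<Rightarrow> ennreal" where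
  "E_q_star _ n q \<sigma> B = (SUP P \<in> (P_class q \<sigma> B :: (real ^ 'p::finite) measure set).
      \<integral>\<^sup>+ x. ennreal (Max (range (\<lambda>j. \<bar>(1 / real n) * (\<Sum>i<n. x i $ j)\<bar>)))
        \<partial>PiM {..<n} (\<lambda>_. P))"

end

theory Submission
  imports Defs
begin

(* The first inequality holds because i.i.d. laws are a special case of independent ones.
   For the second, let X_1, ..., X_n be independent with X_k ~ P_k and let M be the uniform
   mixture of P_1, ..., P_n. An i.i.d. sample Y_1, ..., Y_n from M arises by drawing a uniformly
   random map kappa : [n] -> [n] and then independent Y_i ~ P_(kappa i), so E || Y_1 + ... + Y_n ||
   is the average over kappa of these conditional expectations. For fixed kappa the sum contains
   one copy of X_k for every k in the image of kappa, plus further independent mean-zero terms,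
   which by Jensen's inequality can only increase the expected sup-norm. Every k lies in the
   image of exactly n^n - (n-1)^n maps, so the triangle inequality gives
   (n^n - (n-1)^n) E || X_1 + ... + X_n || <= n^n E || Y_1 + ... + Y_n ||, and
   n^n - (n-1)^n >= (1 - 1/e) n^n >= n^n / 2. This proves the bound with constant 2. *)

lemma linf_ge_component: "\<bar>x $ j\<bar> \<le> linf x"
  unfolding linf_def by (rule Max_ge) auto

lemma linf_nonneg: "0 \<le> linf x"
  by (rule order_trans[OF abs_ge_zero linf_ge_component])

lemma linf_attained:
  obtains j where "linf x = \<bar>x $ j\<bar>"
proof -
  have "linf x \<in> range (\<lambda>j. \<bar>x $ j\<bar>)"
    unfolding linf_def by (rule Max_in) auto
  then show ?thesis using that by blast
qed

lemma linf_triangle: "linf (x + y) \<le> linf x + linf y"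
proof -
  obtain j where "linf (x + y) = \<bar>(x + y) $ j\<bar>" by (rule linf_attained)
  also have "\<dots> = \<bar>x $ j + y $ j\<bar>" by simp
  also have "\<dots> \<le> \<bar>x $ j\<bar> + \<bar>y $ j\<bar>" by (rule abs_triangle_ineq)
  also have "\<dots> \<le> linf x + linf y" by (intro add_mono linf_ge_component)
  finally show ?thesis .
qed

lemma linf_zero [simp]: "linf 0 = 0"
  by (simp add: linf_def)

lemma linf_sum: "linf (\<Sum>a\<in>A. f a) \<le> (\<Sum>a\<in>A. linf (f a))"
proof (cases "finite A")
  case True
  then show ?thesis
  proof (induction A rule: finite_induct)
    case (insert a A)
    then show ?case
      using linf_triangle[of "f a" "sum f A"] by simp
  qed simp
qed simp

lemma linf_scaleR: "linf (c *\<^sub>R x) = \<bar>c\<bar> * linf x"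
proof (rule antisym)
  obtain j where "linf (c *\<^sub>R x) = \<bar>(c *\<^sub>R x) $ j\<bar>" by (rule linf_attained)
  then have "linf (c *\<^sub>R x) = \<bar>c\<bar> * \<bar>x $ j\<bar>" by (simp add: abs_mult)
  then show "linf (c *\<^sub>R x) \<le> \<bar>c\<bar> * linf x"
    by (simp add: linf_ge_component mult_left_mono)
next
  obtain j where "linf x = \<bar>x $ j\<bar>" using linf_attained by blast
  moreover have "\<bar>c\<bar> * \<bar>x $ j\<bar> \<le> linf (c *\<^sub>R x)"
    using linf_ge_component[of "c *\<^sub>R x" j] by (simp add: abs_mult)
  ultimately show "\<bar>c\<bar> * linf x \<le> linf (c *\<^sub>R x)" by simp
qed

lemma borel_measurable_linf [measurable]: "linf \<in> borel_measurable borel"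
  unfolding linf_def[abs_def] by measurable

lemma linf_le_nn_integral_add_mean_zero:
  fixes Z :: "'a \<Rightarrow> real ^ 'p::finite"
  assumes "prob_space Q"
    and integrable: "\<And>j. integrable Q (\<lambda>y. Z y $ j)"
    and mean_zero: "\<And>j. (\<integral>y. Z y $ j \<partial>Q) = 0"
  shows "ennreal (linf a) \<le> (\<integral>\<^sup>+y. ennreal (linf (a + Z y)) \<partial>Q)"
proof -
  interpret prob_space Q by fact
  obtain j where j: "linf a = \<bar>a $ j\<bar>" using linf_attained by blast
  have "(\<integral>y. a $ j + Z y $ j \<partial>Q) = a $ j"
    using integrable mean_zero by (simp add: prob_space)
  then have "ennreal (linf a) \<le> ennreal (\<integral>y. \<bar>a $ j + Z y $ j\<bar> \<partial>Q)"
    unfolding j by (metis integral_abs_bound ennreal_leI)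
  also have "\<dots> = (\<integral>\<^sup>+y. ennreal \<bar>a $ j + Z y $ j\<bar> \<partial>Q)"
    using integrable by (intro nn_integral_eq_integral[symmetric]) auto
  also have "\<dots> \<le> (\<integral>\<^sup>+y. ennreal (linf (a + Z y)) \<partial>Q)"
    using linf_ge_component[of "a + Z _" j] by (intro nn_integral_mono ennreal_leI) simp
  finally show ?thesis .
qed

lemma integral_PiM_component:
  assumes M: "\<And>i. i \<in> I \<Longrightarrow> prob_space (M i)" and i: "i \<in> I"
    and f: "(f :: _ \<Rightarrow> real) \<in> borel_measurable (M i)"
  shows "integrable (PiM I M) (\<lambda>x. f (x i)) \<longleftrightarrow> integrable (M i) f"
    and "(\<integral>x. f (x i) \<partial>PiM I M) = (\<integral>y. f y \<partial>M i)"
proof -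
  have component: "(\<lambda>x. x i) \<in> measurable (PiM I M) (M i)"
    using i by (rule measurable_component_singleton)
  have "distr (PiM I M) (M i) (\<lambda>x. x i) = M i"
    using M i by (rule distr_PiM_component)
  then show "integrable (PiM I M) (\<lambda>x. f (x i)) \<longleftrightarrow> integrable (M i) f"
    and "(\<integral>x. f (x i) \<partial>PiM I M) = (\<integral>y. f y \<partial>M i)"
    using integrable_distr_eq[OF component f] integral_distr[OF component f] by simp_all
qed

lemma AE_PiM_component_iff:
  assumes M: "\<And>i. i \<in> I \<Longrightarrow> prob_space (M i)" and i: "i \<in> I"
    and P: "{y \<in> space (M i). P y} \<in> sets (M i)"
  shows "(AE x in PiM I M. P (x i)) \<longleftrightarrow> (AE y in M i. P y)"
proof -
  have component: "(\<lambda>x. x i) \<in> measurable (PiM I M) (M i)"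
    using i by (rule measurable_component_singleton)
  have "distr (PiM I M) (M i) (\<lambda>x. x i) = M i"
    using M i by (rule distr_PiM_component)
  then show ?thesis
    using AE_distr_iff[OF component P] by metis
qed

lemma nn_integral_PiM_restrict:
  assumes M: "\<And>i. prob_space (M i)" and K: "finite K" "J \<subseteq> K"
    and F: "F \<in> borel_measurable (PiM J M)"
  shows "(\<integral>\<^sup>+x. F (restrict x J) \<partial>PiM K M) = (\<integral>\<^sup>+y. F y \<partial>PiM J M)"
proof -
  interpret product_prob_space M K
    using M by (simp add: product_prob_space_def product_prob_space_axioms_def
        product_sigma_finite_def prob_space_imp_sigma_finite)
  have "(\<integral>\<^sup>+x. F (restrict x J) \<partial>PiM K M)
      = (\<integral>\<^sup>+y. F y \<partial>distr (PiM K M) (PiM J M) (\<lambda>x. restrict x J))"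
    using K F by (intro nn_integral_distr[symmetric] measurable_restrict_subset) auto
  also have "distr (PiM K M) (PiM J M) (\<lambda>x. restrict x J) = PiM J M"
    using K by (intro distr_restrict[symmetric])
  finally show ?thesis .
qed

lemma nn_integral_PiM_reindex:
  assumes M: "\<And>k. prob_space (M k)"
    and f: "inj_on f I" "f \<in> I \<rightarrow> K" and F: "F \<in> borel_measurable (PiM I (\<lambda>i. M (f i)))"
  shows "(\<integral>\<^sup>+y. F y \<partial>PiM I (\<lambda>i. M (f i))) = (\<integral>\<^sup>+x. F (\<lambda>i\<in>I. x (f i)) \<partial>PiM K M)"
proof -
  have restrict: "(\<lambda>x. \<lambda>i\<in>I. x (f i)) \<in> measurable (PiM K M) (PiM I (\<lambda>i. M (f i)))"
    using f by (intro measurable_restrict measurable_component_singleton) auto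
  have distr: "distr (PiM K M) (PiM I (\<lambda>i. M (f i))) (\<lambda>x. \<lambda>i\<in>I. x (f i)) = PiM I (\<lambda>i. M (f i))"
    using M f by (intro distr_PiM_reindex)
  show ?thesis
    using nn_integral_distr[OF restrict, of F] F unfolding distr by simp
qed

lemma borel_measurable_PiM_sum:
  fixes M :: "'i \<Rightarrow> 'a::{second_countable_topology, topological_comm_monoid_add} measure"
  assumes "\<And>i. i \<in> J \<Longrightarrow> sets (M i) = sets borel" "J \<subseteq> I"
  shows "(\<lambda>x. \<Sum>i\<in>J. x i) \<in> borel_measurable (PiM I M)"
proof (rule borel_measurable_sum)
  fix i assume i: "i \<in> J"
  then have "(\<lambda>x. x i) \<in> measurable (PiM I M) (M i)"
    using assms(2) by (intro measurable_component_singleton) auto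
  then show "(\<lambda>x. x i) \<in> borel_measurable (PiM I M)"
    by (subst (asm) measurable_cong_sets[OF refl assms(1)[OF i]])
qed

lemma borel_measurable_nn_integral_fun_upd:
  assumes "sigma_finite_measure N" "sets N = sets L"
    and f: "f \<in> borel_measurable (PiM (insert a I) (\<lambda>_. L))"
  shows "(\<lambda>x. \<integral>\<^sup>+y. f (x(a := y)) \<partial>N) \<in> borel_measurable (PiM I (\<lambda>_. L))"
proof -
  interpret N: sigma_finite_measure N by fact
  have "(\<lambda>(x, y). x(a := y)) \<in> measurable (PiM I (\<lambda>_. L) \<Otimes>\<^sub>M N) (PiM (insert a I) (\<lambda>_. L))"
    unfolding measurable_cong_sets[OF sets_pair_measure_cong[OF refl assms(2)] refl]
    using measurable_add_dim[of a I "\<lambda>_. L"] by simp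
  then have "(\<lambda>(x, y). f (x(a := y))) \<in> borel_measurable (PiM I (\<lambda>_. L) \<Otimes>\<^sub>M N)"
    using f by (simp add: measurable_compose[where f="\<lambda>(x, y). x(a := y)"] split_beta')
  then show ?thesis
    using N.borel_measurable_nn_integral_fst by fastforce
qed

lemma nn_integral_PiM_insert_fun_upd:
  assumes N: "\<And>k. prob_space (N k)" and I: "finite I" "a \<notin> I"
    and f: "f \<in> borel_measurable (PiM (insert a I) (\<lambda>i. N ((\<kappa>(a := k)) i)))"
  shows "(\<integral>\<^sup>+x. f x \<partial>PiM (insert a I) (\<lambda>i. N ((\<kappa>(a := k)) i)))
       = (\<integral>\<^sup>+x. \<integral>\<^sup>+y. f (x(a := y)) \<partial>N k \<partial>PiM I (\<lambda>i. N (\<kappa> i)))"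
proof -
  interpret product_sigma_finite "\<lambda>i. N ((\<kappa>(a := k)) i)"
    by (simp add: product_sigma_finite_def N prob_space_imp_sigma_finite)
  have "PiM I (\<lambda>i. N ((\<kappa>(a := k)) i)) = PiM I (\<lambda>i. N (\<kappa> i))"
    using I(2) by (intro PiM_cong) auto
  then show ?thesis
    using product_nn_integral_insert[OF I f] by (simp only: fun_upd_same)
qed

section \<open>Counting maps that hit a point\<close>

lemma card_PiE_hitting:
  assumes "finite I" "finite K" "k \<in> K"
  shows "card {\<kappa> \<in> PiE I (\<lambda>_. K). k \<in> \<kappa> ` I} = card K ^ card I - (card K - 1) ^ card I"
proof -
  have "{\<kappa> \<in> PiE I (\<lambda>_. K). k \<in> \<kappa> ` I} = PiE I (\<lambda>_. K) - PiE I (\<lambda>_. K - {k})"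
    by (auto simp: PiE_iff extensional_def)
  moreover have "PiE I (\<lambda>_. K - {k}) \<subseteq> PiE I (\<lambda>_. K)"
    by (auto simp: PiE_iff)
  ultimately show ?thesis
    using assms by (simp add: card_Diff_subset finite_PiE card_PiE)
qed

lemma sum_PiE_sum_image:
  fixes x :: "'k \<Rightarrow> 'a::real_vector"
  assumes "finite I" "finite K"
  shows "(\<Sum>\<kappa>\<in>PiE I (\<lambda>_. K). \<Sum>k\<in>\<kappa> ` I. x k)
       = real (card K ^ card I - (card K - 1) ^ card I) *\<^sub>R (\<Sum>k\<in>K. x k)"
proof -
  have "(\<Sum>\<kappa>\<in>PiE I (\<lambda>_. K). \<Sum>k\<in>\<kappa> ` I. x k)
      = (\<Sum>\<kappa>\<in>PiE I (\<lambda>_. K). \<Sum>k\<in>K. if k \<in> \<kappa> ` I then x k else 0)"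
  proof (rule sum.cong[OF refl])
    fix \<kappa> assume "\<kappa> \<in> PiE I (\<lambda>_. K)"
    then have "{k \<in> K. k \<in> \<kappa> ` I} = \<kappa> ` I" by (auto simp: PiE_iff)
    moreover have "(\<Sum>k\<in>K. if k \<in> \<kappa> ` I then x k else 0) = (\<Sum>k\<in>{k \<in> K. k \<in> \<kappa> ` I}. x k)"
      using assms by (simp add: sum.inter_filter)
    ultimately show "(\<Sum>k\<in>\<kappa> ` I. x k) = (\<Sum>k\<in>K. if k \<in> \<kappa> ` I then x k else 0)"
      by simp
  qed
  also have "\<dots> = (\<Sum>k\<in>K. \<Sum>\<kappa>\<in>PiE I (\<lambda>_. K). if k \<in> \<kappa> ` I then x k else 0)"
    by (rule sum.swap)
  also have "\<dots> = (\<Sum>k\<in>K. real (card {\<kappa> \<in> PiE I (\<lambda>_. K). k \<in> \<kappa> ` I}) *\<^sub>R x k)"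
    using assms by (simp add: sum.inter_filter[symmetric] finite_PiE sum_constant_scale)
  also have "\<dots> = (\<Sum>k\<in>K. real (card K ^ card I - (card K - 1) ^ card I) *\<^sub>R x k)"
    using assms by (simp add: card_PiE_hitting)
  finally show ?thesis
    by (simp add: scaleR_sum_right)
qed

lemma linf_sum_le_sum_PiE_image:
  fixes x :: "'k \<Rightarrow> real ^ 'p::finite"
  assumes "finite I" "finite K"
  shows "real (card K ^ card I - (card K - 1) ^ card I) * linf (\<Sum>k\<in>K. x k)
       \<le> (\<Sum>\<kappa>\<in>PiE I (\<lambda>_. K). linf (\<Sum>k\<in>\<kappa> ` I. x k))"
proof -
  have "real (card K ^ card I - (card K - 1) ^ card I) * linf (\<Sum>k\<in>K. x k)
      = linf (\<Sum>\<kappa>\<in>PiE I (\<lambda>_. K). \<Sum>k\<in>\<kappa> ` I. x k)"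
    using assms by (simp add: sum_PiE_sum_image linf_scaleR)
  also have "\<dots> \<le> (\<Sum>\<kappa>\<in>PiE I (\<lambda>_. K). linf (\<Sum>k\<in>\<kappa> ` I. x k))"
    by (rule linf_sum)
  finally show ?thesis .
qed

lemma self_power_le_twice_diff_power:
  assumes "1 \<le> n"
  shows "real n ^ n \<le> 2 * real (n ^ n - (n - 1) ^ n)"
proof -
  have n: "0 < real n" using assms by simp
  \<comment> \<open>\<open>(1 - 1/n)^n \<le> exp (-1) \<le> 1/2\<close>\<close>
  have "(1 - 1 / real n) ^ n \<le> exp (- 1 / real n) ^ n"
    using assms exp_ge_add_one_self[of "- 1 / real n"] by (intro power_mono) (auto simp: field_simps)
  also have "\<dots> = exp (- 1)"
    using n by (simp flip: exp_of_nat_mult)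
  also have "\<dots> \<le> 1 / 2"
    using exp_ge_add_one_self[of 1] by (simp add: exp_minus field_simps)
  finally have "(1 - 1 / real n) ^ n \<le> 1 / 2" .
  moreover have "real (n - 1) ^ n = real n ^ n * (1 - 1 / real n) ^ n"
    using assms n by (simp add: of_nat_diff field_simps flip: power_mult_distrib)
  ultimately have "2 * real (n - 1) ^ n \<le> real n ^ n"
    using n by (simp add: mult_left_mono)
  moreover have "(n - 1) ^ n \<le> n ^ n"
    by (intro power_mono) auto
  ultimately show ?thesis
    by (simp add: of_nat_diff)
qed

section \<open>Uniform mixtures\<close>

definition uniform_mixture :: "'k set \<Rightarrow> ('k \<Rightarrow> 'a measure) \<Rightarrow> 'a measure" where
  "uniform_mixture K N = measure_pmf (pmf_of_set K) \<bind> N"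

context
  fixes K :: "'k set" and N :: "'k \<Rightarrow> 'a measure" and L :: "'a measure"
  assumes finite: "finite K" and nonempty: "K \<noteq> {}"
    and prob_space: "\<And>k. prob_space (N k)" and sets_N: "\<And>k. sets (N k) = sets L"
begin

lemma measurable_mixture_kernel: "N \<in> measurable (measure_pmf (pmf_of_set K)) (subprob_algebra L)"
  by (auto simp: space_subprob_algebra prob_space prob_space_imp_subprob_space sets_N)

lemma prob_space_uniform_mixture: "prob_space (uniform_mixture K N)"
  unfolding uniform_mixture_def
  by (intro measure_pmf.prob_space_bind[OF _ measurable_mixture_kernel]) (auto simp: prob_space)

lemma sets_uniform_mixture: "sets (uniform_mixture K N) = sets L"
  unfolding uniform_mixture_def by (rule sets_bind) (auto simp: sets_N)

lemma nn_integral_uniform_mixture: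
  assumes "g \<in> borel_measurable L"
  shows "(\<integral>\<^sup>+x. g x \<partial>uniform_mixture K N) = ennreal (1 / card K) * (\<Sum>k\<in>K. \<integral>\<^sup>+x. g x \<partial>N k)"
proof -
  have "(\<integral>\<^sup>+x. g x \<partial>uniform_mixture K N) = (\<integral>\<^sup>+k. \<integral>\<^sup>+x. g x \<partial>N k \<partial>measure_pmf (pmf_of_set K))"
    unfolding uniform_mixture_def by (rule nn_integral_bind[OF assms measurable_mixture_kernel])
  also have "\<dots> = (\<Sum>k\<in>K. \<integral>\<^sup>+x. g x \<partial>N k) / of_nat (card K)"
    by (rule nn_integral_pmf_of_set[OF nonempty finite])
  also have "\<dots> = ennreal (1 / card K) * (\<Sum>k\<in>K. \<integral>\<^sup>+x. g x \<partial>N k)"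
    using finite nonempty
    by (simp add: divide_ennreal_def inverse_ennreal ennreal_of_nat_eq_real_of_nat mult.commute
        card_gt_0_iff inverse_eq_divide)
  finally show ?thesis .
qed

lemma integral_uniform_mixture:
  fixes f :: "'a \<Rightarrow> real"
  assumes f: "f \<in> borel_measurable L" and integrable: "\<And>k. k \<in> K \<Longrightarrow> integrable (N k) f"
  shows "has_bochner_integral (uniform_mixture K N) f (1 / card K * (\<Sum>k\<in>K. \<integral>x. f x \<partial>N k))"
proof -
  have nonneg: "has_bochner_integral (uniform_mixture K N) g (1 / card K * (\<Sum>k\<in>K. \<integral>x. g x \<partial>N k))"
    if g: "g \<in> borel_measurable L" "\<And>x. 0 \<le> g x" "\<And>k. k \<in> K \<Longrightarrow> integrable (N k) g"
    for g :: "'a \<Rightarrow> real"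
  proof (rule has_bochner_integral_nn_integral)
    show "g \<in> borel_measurable (uniform_mixture K N)"
      using g(1) measurable_cong_sets[OF sets_uniform_mixture refl] by blast
    show "0 \<le> 1 / card K * (\<Sum>k\<in>K. \<integral>x. g x \<partial>N k)"
      using g(2) by (intro mult_nonneg_nonneg sum_nonneg integral_nonneg) auto
    have "(\<integral>\<^sup>+x. ennreal (g x) \<partial>uniform_mixture K N)
        = ennreal (1 / card K) * (\<Sum>k\<in>K. ennreal (\<integral>x. g x \<partial>N k))"
      using g by (simp add: nn_integral_uniform_mixture nn_integral_eq_integral measurable_cong_sets[OF sets_N refl])
    also have "\<dots> = ennreal (1 / card K * (\<Sum>k\<in>K. \<integral>x. g x \<partial>N k))"
      using g(2) by (simp add: sum_ennreal integral_nonneg ennreal_mult'[symmetric])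
    finally show "(\<integral>\<^sup>+x. ennreal (g x) \<partial>uniform_mixture K N)
        = ennreal (1 / card K * (\<Sum>k\<in>K. \<integral>x. g x \<partial>N k))" .
  qed (use g(2) in simp)
  have "has_bochner_integral (uniform_mixture K N) (\<lambda>x. max 0 (f x) - max 0 (- f x))
      (1 / card K * (\<Sum>k\<in>K. \<integral>x. max 0 (f x) \<partial>N k) - 1 / card K * (\<Sum>k\<in>K. \<integral>x. max 0 (- f x) \<partial>N k))"
    using f integrable by (intro has_bochner_integral_diff nonneg) (auto intro: integrable_max)
  moreover have parts: "(\<lambda>x. max 0 (f x) - max 0 (- f x)) = f"
    by (auto simp: fun_eq_iff max_def)
  moreover have "1 / card K * (\<Sum>k\<in>K. \<integral>x. max 0 (f x) \<partial>N k) - 1 / card K * (\<Sum>k\<in>K. \<integral>x. max 0 (- f x) \<partial>N k)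
      = 1 / card K * (\<Sum>k\<in>K. (\<integral>x. max 0 (f x) \<partial>N k) - (\<integral>x. max 0 (- f x) \<partial>N k))"
    by (simp add: right_diff_distrib sum_subtractf)
  moreover have "(\<integral>x. max 0 (f x) \<partial>N k) - (\<integral>x. max 0 (- f x) \<partial>N k) = (\<integral>x. f x \<partial>N k)"
    if "k \<in> K" for k
    using integrable[OF that] parts
    by (subst Bochner_Integration.integral_diff[symmetric]) (auto intro: integrable_max)
  ultimately show ?thesis
    by simp
qed

lemma AE_uniform_mixture:
  assumes "Measurable.pred L P" and "\<And>k. k \<in> K \<Longrightarrow> AE x in N k. P x"
  shows "AE x in uniform_mixture K N. P x"
  unfolding uniform_mixture_def
  using assms finite nonempty by (simp add: AE_bind[OF measurable_mixture_kernel] AE_measure_pmf_iff)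

lemma nn_integral_PiM_uniform_mixture:
  assumes "finite I" and "f \<in> borel_measurable (PiM I (\<lambda>_. L))"
  shows "(\<integral>\<^sup>+x. f x \<partial>PiM I (\<lambda>_. uniform_mixture K N))
       = (\<Sum>\<kappa>\<in>PiE I (\<lambda>_. K). ennreal (1 / card K) ^ card I * \<integral>\<^sup>+x. f x \<partial>PiM I (\<lambda>i. N (\<kappa> i)))"
  using assms
proof (induction I arbitrary: f rule: finite_induct)
  case empty
  then show ?case by (simp add: PiM_empty)
next
  case (insert a I f)
  define M where "M = uniform_mixture K N"
  interpret M: prob_space M
    unfolding M_def by (rule prob_space_uniform_mixture)
  interpret product_sigma_finite "\<lambda>_. M"
    by (simp add: product_sigma_finite_def M.sigma_finite_measure_axioms)
  have sets_M: "sets M = sets L"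
    unfolding M_def by (rule sets_uniform_mixture)
  have sets_PiM_M: "sets (PiM J (\<lambda>_. M)) = sets (PiM J (\<lambda>_. L))" for J
    using sets_M by (intro sets_PiM_cong) auto
  have sets_PiM_N: "sets (PiM J (\<lambda>i. N (\<kappa> i))) = sets (PiM J (\<lambda>_. L))" for J \<kappa>
    using sets_N by (intro sets_PiM_cong) auto
  have f_N: "f \<in> borel_measurable (PiM (insert a I) (\<lambda>i. N (\<kappa> i)))" for \<kappa>
    using insert.prems unfolding measurable_cong_sets[OF sets_PiM_N refl] .
  define G where "G k x = (\<integral>\<^sup>+y. f (x(a := y)) \<partial>N k)" for k x
  have G: "G k \<in> borel_measurable (PiM I (\<lambda>_. L))" for k
    unfolding G_def using insert.prems prob_space sets_N
    by (intro borel_measurable_nn_integral_fun_upd prob_space_imp_sigma_finite)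
  have G_integral: "(\<integral>\<^sup>+x. G k x \<partial>PiM I (\<lambda>i. N (\<kappa> i)))
      = (\<integral>\<^sup>+x. f x \<partial>PiM (insert a I) (\<lambda>i. N ((\<kappa>(a := k)) i)))" for \<kappa> k
    unfolding G_def using insert(1,2) f_N by (intro nn_integral_PiM_insert_fun_upd[symmetric] prob_space)
  have "(\<integral>\<^sup>+x. f x \<partial>PiM (insert a I) (\<lambda>_. M)) = (\<integral>\<^sup>+x. \<integral>\<^sup>+y. f (x(a := y)) \<partial>M \<partial>PiM I (\<lambda>_. M))"
    using insert.prems unfolding measurable_cong_sets[OF sets_PiM_M refl, symmetric]
    by (rule product_nn_integral_insert[OF insert(1,2)])
  also have "\<dots> = (\<integral>\<^sup>+x. ennreal (1 / card K) * (\<Sum>k\<in>K. G k x) \<partial>PiM I (\<lambda>_. M))"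
  proof (rule nn_integral_cong)
    fix x assume "x \<in> space (PiM I (\<lambda>_. M))"
    then have "x \<in> space (PiM I (\<lambda>_. L))"
      using sets_eq_imp_space_eq[OF sets_PiM_M[of I]] by simp
    then have "(\<lambda>y. f (x(a := y))) \<in> borel_measurable L"
      using measurable_comp[OF measurable_component_update[OF _ insert(2)] insert.prems]
      by (simp add: comp_def del: fun_upd_apply)
    then show "(\<integral>\<^sup>+y. f (x(a := y)) \<partial>M) = ennreal (1 / card K) * (\<Sum>k\<in>K. G k x)"
      unfolding M_def G_def by (rule nn_integral_uniform_mixture)
  qed
  also have "\<dots> = ennreal (1 / card K) * (\<Sum>k\<in>K. \<integral>\<^sup>+x. G k x \<partial>PiM I (\<lambda>_. M))"
    using G unfolding measurable_cong_sets[OF sets_PiM_M refl, symmetric]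
    by (simp add: nn_integral_cmult nn_integral_sum)
  also have "\<dots> = ennreal (1 / card K) * (\<Sum>k\<in>K. \<Sum>\<kappa>\<in>PiE I (\<lambda>_. K).
      ennreal (1 / card K) ^ card I * \<integral>\<^sup>+x. G k x \<partial>PiM I (\<lambda>i. N (\<kappa> i)))"
    using insert.IH G unfolding M_def by simp
  also have "\<dots> = (\<Sum>k\<in>K. \<Sum>\<kappa>\<in>PiE I (\<lambda>_. K). ennreal (1 / card K) ^ card (insert a I) *
      \<integral>\<^sup>+x. f x \<partial>PiM (insert a I) (\<lambda>i. N ((\<kappa>(a := k)) i)))"
    using insert(1,2) by (simp add: G_integral sum_distrib_left mult.assoc)
  also have "\<dots> = (\<Sum>(k, \<kappa>)\<in>K \<times> PiE I (\<lambda>_. K). ennreal (1 / card K) ^ card (insert a I) *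
      \<integral>\<^sup>+x. f x \<partial>PiM (insert a I) (\<lambda>i. N ((\<kappa>(a := k)) i)))"
    by (rule sum.cartesian_product)
  also have "\<dots> = (\<Sum>\<kappa>\<in>PiE (insert a I) (\<lambda>_. K). ennreal (1 / card K) ^ card (insert a I) *
      \<integral>\<^sup>+x. f x \<partial>PiM (insert a I) (\<lambda>i. N (\<kappa> i)))"
    unfolding PiE_insert_eq sum.reindex[OF inj_combinator[OF insert(2), of "\<lambda>_. K"]]
    by (simp add: comp_def case_prod_beta del: fun_upd_apply)
  finally show ?case
    unfolding M_def .
qed

end

section \<open>From independent to i.i.d. summands\<close>

lemma mean_zero_PiM_component:
  fixes M :: "'i \<Rightarrow> (real ^ 'p::finite) measure"
  assumes M: "\<And>i. prob_space (M i)" "\<And>i. sets (M i) = sets borel"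
    and i: "i \<in> I" and mean_zero: "mean_zero (M i)"
  shows "integrable (PiM I M) (\<lambda>x. x i $ j)" and "(\<integral>x. x i $ j \<partial>PiM I M) = 0"
proof -
  have "(\<lambda>x. x $ j) \<in> borel_measurable (M i)"
    unfolding measurable_cong_sets[OF M(2) refl] by simp
  then show "integrable (PiM I M) (\<lambda>x. x i $ j)" and "(\<integral>x. x i $ j \<partial>PiM I M) = 0"
    using integral_PiM_component[where I=I and M=M and i=i and f="\<lambda>x. x $ j", OF M(1) i]
      mean_zero by (auto simp: mean_zero_def)
qed

lemma linf_le_nn_integral_add_PiM_sum:
  fixes M :: "'i \<Rightarrow> (real ^ 'p::finite) measure"
  assumes M: "\<And>i. prob_space (M i)" "\<And>i. sets (M i) = sets borel"
    and mean_zero: "\<And>i. i \<in> L \<Longrightarrow> mean_zero (M i)"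
  shows "ennreal (linf a) \<le> (\<integral>\<^sup>+y. ennreal (linf (a + (\<Sum>i\<in>L. y i))) \<partial>PiM L M)"
proof (rule linf_le_nn_integral_add_mean_zero)
  show "prob_space (PiM L M)"
    using M by (intro prob_space_PiM)
  fix j
  have "integrable (PiM L M) (\<lambda>y. y i $ j)" "(\<integral>y. y i $ j \<partial>PiM L M) = 0" if "i \<in> L" for i
    by (intro mean_zero_PiM_component M mean_zero that)+
  then show "integrable (PiM L M) (\<lambda>y. (\<Sum>i\<in>L. y i) $ j)"
    and "(\<integral>y. (\<Sum>i\<in>L. y i) $ j \<partial>PiM L M) = 0"
    by (simp_all add: sum_component)
qed

lemma nn_integral_linf_sum_mono_subset:
  fixes M :: "'i \<Rightarrow> (real ^ 'p::finite) measure"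
  assumes M: "\<And>i. prob_space (M i)" "\<And>i. sets (M i) = sets borel"
    and I: "finite I" "J \<subseteq> I" and mean_zero: "\<And>i. i \<in> I - J \<Longrightarrow> mean_zero (M i)"
  shows "(\<integral>\<^sup>+x. ennreal (linf (\<Sum>i\<in>J. x i)) \<partial>PiM I M)
       \<le> (\<integral>\<^sup>+x. ennreal (linf (\<Sum>i\<in>I. x i)) \<partial>PiM I M)"
proof -
  interpret product_sigma_finite M
    using M by (simp add: product_sigma_finite_def prob_space_imp_sigma_finite)
  define L where "L = I - J"
  have I_eq: "I = J \<union> L" and disjoint: "J \<inter> L = {}" and finite: "finite J" "finite L"
    using I unfolding L_def by (auto intro: finite_subset)
  interpret L: prob_space "PiM L M"
    using M by (intro prob_space_PiM)
  have sum_merge_J: "(\<Sum>i\<in>J. merge J L (x, y) i) = (\<Sum>i\<in>J. x i)" for x y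
    by (intro sum.cong) (auto simp: merge_def)
  have sum_merge: "(\<Sum>i\<in>J \<union> L. merge J L (x, y) i) = (\<Sum>i\<in>J. x i) + (\<Sum>i\<in>L. y i)" for x y
  proof -
    have "(\<Sum>i\<in>J \<union> L. merge J L (x, y) i) = (\<Sum>i\<in>J. merge J L (x, y) i) + (\<Sum>i\<in>L. merge J L (x, y) i)"
      using disjoint finite by (intro sum.union_disjoint) auto
    also have "(\<Sum>i\<in>L. merge J L (x, y) i) = (\<Sum>i\<in>L. y i)"
      using disjoint by (intro sum.cong) (auto simp: merge_def)
    finally show ?thesis
      by (simp only: sum_merge_J)
  qed
  have measurable: "(\<lambda>x. ennreal (linf (\<Sum>i\<in>J'. x i))) \<in> borel_measurable (PiM (J \<union> L) M)"
    if "J' \<subseteq> J \<union> L" for J'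
    using borel_measurable_PiM_sum[of J' M "J \<union> L"] M(2) that by measurable
  have "(\<integral>\<^sup>+x. ennreal (linf (\<Sum>i\<in>J. x i)) \<partial>PiM I M)
      = (\<integral>\<^sup>+x. \<integral>\<^sup>+y. ennreal (linf (\<Sum>i\<in>J. merge J L (x, y) i)) \<partial>PiM L M \<partial>PiM J M)"
    unfolding I_eq using measurable[of J] by (intro product_nn_integral_fold[OF disjoint finite]) auto
  also have "\<dots> = (\<integral>\<^sup>+x. ennreal (linf (\<Sum>i\<in>J. x i)) \<partial>PiM J M)"
    by (simp add: sum_merge_J L.emeasure_space_1)
  also have "\<dots> \<le> (\<integral>\<^sup>+x. \<integral>\<^sup>+y. ennreal (linf (\<Sum>i\<in>J \<union> L. merge J L (x, y) i)) \<partial>PiM L M \<partial>PiM J M)"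
    unfolding sum_merge using mean_zero
    by (intro nn_integral_mono linf_le_nn_integral_add_PiM_sum M) (auto simp: L_def)
  also have "\<dots> = (\<integral>\<^sup>+x. ennreal (linf (\<Sum>i\<in>I. x i)) \<partial>PiM I M)"
    unfolding I_eq using measurable[of "J \<union> L"]
    by (intro product_nn_integral_fold[OF disjoint finite, symmetric]) auto
  finally show ?thesis .
qed

lemma nn_integral_linf_sum_image_le:
  fixes N :: "'k \<Rightarrow> (real ^ 'p::finite) measure" and \<kappa> :: "'i \<Rightarrow> 'k"
  assumes N: "\<And>k. prob_space (N k)" "\<And>k. sets (N k) = sets borel"
    and mean_zero: "\<And>k. k \<in> K \<Longrightarrow> mean_zero (N k)"
    and finite: "finite I" "finite K" and \<kappa>: "\<kappa> \<in> I \<rightarrow> K"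
  shows "(\<integral>\<^sup>+x. ennreal (linf (\<Sum>k\<in>\<kappa> ` I. x k)) \<partial>PiM K N)
       \<le> (\<integral>\<^sup>+y. ennreal (linf (\<Sum>i\<in>I. y i)) \<partial>PiM I (\<lambda>i. N (\<kappa> i)))"
proof -
  \<comment> \<open>the summands indexed by \<open>I - S\<close> are extra independent mean-zero terms\<close>
  obtain S where S: "S \<subseteq> I" "inj_on \<kappa> S" "\<kappa> ` S = \<kappa> ` I"
    using subset_image_inj[of "\<kappa> ` I" \<kappa> I] by auto
  have N\<kappa>: "\<And>i. prob_space (N (\<kappa> i))" "\<And>i. sets (N (\<kappa> i)) = sets borel"
    using N by auto
  have "(\<integral>\<^sup>+x. ennreal (linf (\<Sum>k\<in>\<kappa> ` I. x k)) \<partial>PiM K N)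
      = (\<integral>\<^sup>+x. ennreal (linf (\<Sum>k\<in>\<kappa> ` I. restrict x (\<kappa> ` I) k)) \<partial>PiM K N)"
    by (intro nn_integral_cong) simp
  also have "\<dots> = (\<integral>\<^sup>+x. ennreal (linf (\<Sum>k\<in>\<kappa> ` I. x k)) \<partial>PiM (\<kappa> ` I) N)"
    using \<kappa> finite borel_measurable_PiM_sum[of "\<kappa> ` I" N "\<kappa> ` I"] N(2)
    by (intro nn_integral_PiM_restrict N(1)) (auto, measurable)
  also have "\<dots> = (\<integral>\<^sup>+x. ennreal (linf (\<Sum>i\<in>S. (\<lambda>i\<in>S. x (\<kappa> i)) i)) \<partial>PiM (\<kappa> ` I) N)"
    using S by (simp add: sum.reindex flip: S(3))
  also have "\<dots> = (\<integral>\<^sup>+y. ennreal (linf (\<Sum>i\<in>S. y i)) \<partial>PiM S (\<lambda>i. N (\<kappa> i)))"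
    using S borel_measurable_PiM_sum[of S "\<lambda>i. N (\<kappa> i)" S] N(2)
    by (intro nn_integral_PiM_reindex[symmetric] N(1)) (auto, measurable)
  also have "\<dots> = (\<integral>\<^sup>+y. ennreal (linf (\<Sum>i\<in>S. restrict y S i)) \<partial>PiM I (\<lambda>i. N (\<kappa> i)))"
    using S finite borel_measurable_PiM_sum[of S "\<lambda>i. N (\<kappa> i)" S] N(2)
    by (intro nn_integral_PiM_restrict[symmetric] N\<kappa>(1)) (auto, measurable)
  also have "\<dots> = (\<integral>\<^sup>+y. ennreal (linf (\<Sum>i\<in>S. y i)) \<partial>PiM I (\<lambda>i. N (\<kappa> i)))"
    by (intro nn_integral_cong) simp
  also have "\<dots> \<le> (\<integral>\<^sup>+y. ennreal (linf (\<Sum>i\<in>I. y i)) \<partial>PiM I (\<lambda>i. N (\<kappa> i)))"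
    using \<kappa> S finite by (intro nn_integral_linf_sum_mono_subset N\<kappa> mean_zero) auto
  finally show ?thesis .
qed

lemma nn_integral_linf_sum_le_sum_PiE:
  fixes N :: "'k \<Rightarrow> (real ^ 'p::finite) measure"
  assumes N: "\<And>k. prob_space (N k)" "\<And>k. sets (N k) = sets borel"
    and mean_zero: "\<And>k. k \<in> K \<Longrightarrow> mean_zero (N k)" and finite: "finite I" "finite K"
  shows "ennreal (real (card K ^ card I - (card K - 1) ^ card I)) * (\<integral>\<^sup>+x. ennreal (linf (\<Sum>k\<in>K. x k)) \<partial>PiM K N)
       \<le> (\<Sum>\<kappa>\<in>PiE I (\<lambda>_. K). \<integral>\<^sup>+y. ennreal (linf (\<Sum>i\<in>I. y i)) \<partial>PiM I (\<lambda>i. N (\<kappa> i)))"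
proof -
  let ?m = "real (card K ^ card I - (card K - 1) ^ card I)"
  have measurable: "(\<lambda>x. ennreal (linf (\<Sum>k\<in>J. x k))) \<in> borel_measurable (PiM K N)" if "J \<subseteq> K" for J
    using borel_measurable_PiM_sum[of J N K] N(2) that by measurable
  have "ennreal ?m * (\<integral>\<^sup>+x. ennreal (linf (\<Sum>k\<in>K. x k)) \<partial>PiM K N)
      = (\<integral>\<^sup>+x. ennreal (?m * linf (\<Sum>k\<in>K. x k)) \<partial>PiM K N)"
    using measurable[of K] by (simp add: nn_integral_cmult ennreal_mult')
  also have "\<dots> \<le> (\<integral>\<^sup>+x. (\<Sum>\<kappa>\<in>PiE I (\<lambda>_. K). ennreal (linf (\<Sum>k\<in>\<kappa> ` I. x k))) \<partial>PiM K N)"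
  proof (rule nn_integral_mono)
    fix x :: "'k \<Rightarrow> real ^ 'p"
    have "?m * linf (\<Sum>k\<in>K. x k) \<le> (\<Sum>\<kappa>\<in>PiE I (\<lambda>_. K). linf (\<Sum>k\<in>\<kappa> ` I. x k))"
      using finite by (rule linf_sum_le_sum_PiE_image)
    then show "ennreal (?m * linf (\<Sum>k\<in>K. x k)) \<le> (\<Sum>\<kappa>\<in>PiE I (\<lambda>_. K). ennreal (linf (\<Sum>k\<in>\<kappa> ` I. x k)))"
      by (simp add: sum_ennreal linf_nonneg ennreal_leI)
  qed
  also have "\<dots> = (\<Sum>\<kappa>\<in>PiE I (\<lambda>_. K). \<integral>\<^sup>+x. ennreal (linf (\<Sum>k\<in>\<kappa> ` I. x k)) \<partial>PiM K N)"
    by (intro nn_integral_sum measurable) (auto simp: PiE_iff)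
  also have "\<dots> \<le> (\<Sum>\<kappa>\<in>PiE I (\<lambda>_. K). \<integral>\<^sup>+y. ennreal (linf (\<Sum>i\<in>I. y i)) \<partial>PiM I (\<lambda>i. N (\<kappa> i)))"
    using finite by (intro sum_mono nn_integral_linf_sum_image_le N mean_zero) (auto simp: PiE_iff)
  finally show ?thesis .
qed

theorem nn_integral_linf_sum_le_uniform_mixture:
  fixes N :: "'k \<Rightarrow> (real ^ 'p::finite) measure"
  assumes K: "finite K" "K \<noteq> {}" and N: "\<And>k. prob_space (N k)" "\<And>k. sets (N k) = sets borel"
    and mean_zero: "\<And>k. k \<in> K \<Longrightarrow> mean_zero (N k)"
  shows "(\<integral>\<^sup>+x. ennreal (linf (\<Sum>k\<in>K. x k)) \<partial>PiM K N)
       \<le> 2 * (\<integral>\<^sup>+x. ennreal (linf (\<Sum>k\<in>K. x k)) \<partial>PiM K (\<lambda>_. uniform_mixture K N))"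
    (is "?A \<le> 2 * ?E")
proof -
  define n where "n = card K"
  have n: "1 \<le> n" "0 < real n"
    using K by (auto simp: n_def card_gt_0_iff Suc_le_eq)
  let ?T = "\<lambda>\<kappa>. \<integral>\<^sup>+y. ennreal (linf (\<Sum>i\<in>K. y i)) \<partial>PiM K (\<lambda>i. N (\<kappa> i))"
  \<comment> \<open>\<open>?E\<close> is the average of \<open>?T \<kappa>\<close> over all \<open>n ^ n\<close> maps \<open>\<kappa> : K \<rightarrow> K\<close>\<close>
  have "?E = (\<Sum>\<kappa>\<in>PiE K (\<lambda>_. K). ennreal (1 / n) ^ n * ?T \<kappa>)"
    unfolding n_def using K N borel_measurable_PiM_sum[of K "\<lambda>_. borel" K]
    by (intro nn_integral_PiM_uniform_mixture) (auto, measurable)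
  also have "\<dots> = ennreal (1 / real n ^ n) * (\<Sum>\<kappa>\<in>PiE K (\<lambda>_. K). ?T \<kappa>)"
    by (simp add: sum_distrib_left ennreal_power power_divide)
  finally have average: "ennreal (real n ^ n) * ?E = (\<Sum>\<kappa>\<in>PiE K (\<lambda>_. K). ?T \<kappa>)"
    using n by (simp add: mult.assoc[symmetric] ennreal_mult'[symmetric])
  have "ennreal (real n ^ n) * ?A \<le> ennreal (2 * real (n ^ n - (n - 1) ^ n)) * ?A"
    using self_power_le_twice_diff_power[OF n(1)] by (intro mult_right_mono ennreal_leI) auto
  also have "\<dots> = 2 * (ennreal (real (n ^ n - (n - 1) ^ n)) * ?A)"
    by (simp add: ennreal_mult mult.assoc)
  also have "\<dots> \<le> 2 * (\<Sum>\<kappa>\<in>PiE K (\<lambda>_. K). ?T \<kappa>)"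
    unfolding n_def using K by (intro mult_left_mono nn_integral_linf_sum_le_sum_PiE N mean_zero) auto
  also have "\<dots> = ennreal (real n ^ n) * (2 * ?E)"
    by (simp add: average[symmetric] ac_simps)
  finally show ?thesis
    using n by (simp add: ennreal_mult_le_mult_iff)
qed

definition admissible_laws ::
    "nat \<Rightarrow> ereal \<Rightarrow> real \<Rightarrow> real \<Rightarrow> (nat \<Rightarrow> (real ^ 'p::finite) measure) set" where
  "admissible_laws n q \<sigma> B =
     {Ps. (\<forall>i<n. is_law (Ps i) \<and> mean_zero (Ps i)) \<and> V_ok \<sigma> n Ps \<and> D_ok q B n Ps}"

lemma nn_integral_Max_abs_mean:
  fixes Ps :: "nat \<Rightarrow> (real ^ 'p::finite) measure"
  assumes "\<And>i. i < n \<Longrightarrow> sets (Ps i) = sets borel"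
  shows "(\<integral>\<^sup>+x. ennreal (Max (range (\<lambda>j. \<bar>(1 / real n) * (\<Sum>i<n. x i $ j)\<bar>))) \<partial>PiM {..<n} Ps)
       = ennreal (1 / real n) * (\<integral>\<^sup>+x. ennreal (linf (\<Sum>i<n. x i)) \<partial>PiM {..<n} Ps)"
proof -
  have "ennreal (Max (range (\<lambda>j. \<bar>(1 / real n) * (\<Sum>i<n. x i $ j)\<bar>)))
      = ennreal (1 / real n) * ennreal (linf (\<Sum>i<n. x i))" for x :: "nat \<Rightarrow> real ^ 'p"
  proof -
    have "Max (range (\<lambda>j. \<bar>(1 / real n) * (\<Sum>i<n. x i $ j)\<bar>)) = linf ((1 / real n) *\<^sub>R (\<Sum>i<n. x i))"
      by (simp add: linf_def sum_component)
    then show ?thesis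
      by (simp add: linf_scaleR ennreal_mult'[symmetric])
  qed
  moreover have "(\<lambda>x. ennreal (linf (\<Sum>i<n. x i))) \<in> borel_measurable (PiM {..<n} Ps)"
    using borel_measurable_PiM_sum[of "{..<n}" Ps "{..<n}"] assms by measurable
  ultimately show ?thesis
    by (simp add: nn_integral_cmult)
qed

lemma const_in_admissible_laws:
  assumes n: "1 \<le> n" and P: "P \<in> P_class q \<sigma> B"
  shows "(\<lambda>_. P) \<in> admissible_laws n q \<sigma> B"
proof -
  have prob: "prob_space P" and moment: "if q = \<infinity> then AE x in P. linf x \<le> B
      else integrable P (\<lambda>x. linf x powr real_of_ereal q) \<and>
        (\<integral>x. linf x powr real_of_ereal q \<partial>P) powr (1 / real_of_ereal q) \<le> B"
    using P by (auto simp: P_class_def is_law_def)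
  have "AE x in PiM {..<n} (\<lambda>_. P). \<forall>i\<in>{..<n}. linf (x i) \<le> B" if "AE x in P. linf x \<le> B"
    using that prob by (intro eventually_ball_finite ballI AE_PiM_component) auto
  then have "D_ok q B n (\<lambda>_. P)"
    using moment n by (auto simp: D_ok_def)
  then show ?thesis
    using P n by (simp add: admissible_laws_def P_class_def V_ok_def)
qed

theorem E_q_star_le_E_q:
  assumes "1 \<le> n"
  shows "E_q_star TYPE('p::finite) n q \<sigma> B \<le> E_q TYPE('p) n q \<sigma> B"
  unfolding E_q_star_def E_q_def admissible_laws_def[symmetric]
  by (intro SUP_least SUP_upper const_in_admissible_laws assms)

lemma AE_linf_le_of_D_ok_infinity:
  fixes Ps :: "nat \<Rightarrow> (real ^ 'p::finite) measure"
  assumes "D_ok \<infinity> B n Ps" and laws: "\<And>i. i < n \<Longrightarrow> is_law (Ps i)" and k: "k < n"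
  shows "AE y in Ps k. linf y \<le> B"
proof -
  have prob: "\<And>i. i \<in> {..<n} \<Longrightarrow> prob_space (Ps i)" and sets: "sets (Ps k) = sets borel"
    using laws k by (auto simp: is_law_def)
  have "{y \<in> space (Ps k). linf y \<le> B} \<in> sets (Ps k)"
    unfolding sets sets_eq_imp_space_eq[OF sets] by measurable
  moreover have "AE x in PiM {..<n} Ps. linf (x k) \<le> B"
    using assms(1) k by (auto simp: D_ok_def elim!: eventually_mono)
  ultimately show ?thesis
    using AE_PiM_component_iff[where M=Ps and I="{..<n}" and i=k and P="\<lambda>y. linf y \<le> B", OF prob] k
    by simp
qed

lemma uniform_mixture_in_P_class:
  fixes Ps N :: "nat \<Rightarrow> (real ^ 'p::finite) measure"
  assumes n: "1 \<le> n" and Ps: "Ps \<in> admissible_laws n q \<sigma> B"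
    and N: "\<And>k. prob_space (N k)" "\<And>k. sets (N k) = sets borel" "\<And>k. k < n \<Longrightarrow> N k = Ps k"
  shows "uniform_mixture {..<n} N \<in> P_class q \<sigma> B"
proof -
  let ?M = "uniform_mixture {..<n} N"
  have K: "finite {..<n}" "{..<n} \<noteq> {}"
    using n by (auto simp: lessThan_empty_iff)
  have mixture_integral: "integrable ?M f \<and> (\<integral>x. f x \<partial>?M) = 1 / real n * (\<Sum>i<n. \<integral>x. f x \<partial>Ps i)"
    if "f \<in> borel_measurable borel" "\<And>i. i < n \<Longrightarrow> integrable (Ps i) f" for f :: "real ^ 'p \<Rightarrow> real"
    using integral_uniform_mixture[OF K N(1,2) that(1)] that(2) N(3)
    by (simp add: has_bochner_integral_iff)
  have adm: "\<forall>i<n. is_law (Ps i) \<and> mean_zero (Ps i)" "V_ok \<sigma> n Ps" "D_ok q B n Ps"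
    using Ps by (auto simp: admissible_laws_def)
  have "mean_zero ?M"
    using adm(1) by (auto simp: mean_zero_def mixture_integral)
  moreover have "integrable ?M (\<lambda>x. (x $ j)^2) \<and> (\<integral>x. (x $ j)^2 \<partial>?M) \<le> \<sigma>^2" for j
    using adm(2) by (auto simp: V_ok_def mixture_integral)
  moreover have "AE x in ?M. linf x \<le> B" if "q = \<infinity>"
  proof (rule AE_uniform_mixture[OF K N(1,2)])
    fix k assume k: "k \<in> {..<n}"
    then have "AE x in Ps k. linf x \<le> B"
      using adm that by (intro AE_linf_le_of_D_ok_infinity) auto
    moreover have "N k = Ps k"
      using N(3) k by simp
    ultimately show "AE x in N k. linf x \<le> B"
      by metis
  qed simp
  moreover have "integrable ?M (\<lambda>x. linf x powr real_of_ereal q) \<and>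
      (\<integral>x. linf x powr real_of_ereal q \<partial>?M) powr (1 / real_of_ereal q) \<le> B" if "q \<noteq> \<infinity>"
    using adm(3) that by (auto simp: D_ok_def mixture_integral)
  ultimately show ?thesis
    using prob_space_uniform_mixture[OF K N(1,2)] sets_uniform_mixture[OF K N(1,2)]
    by (auto simp: P_class_def is_law_def)
qed

theorem E_q_le_twice_E_q_star:
  assumes n: "1 \<le> n"
  shows "E_q TYPE('p::finite) n q \<sigma> B \<le> 2 * E_q_star TYPE('p) n q \<sigma> B"
  unfolding E_q_def admissible_laws_def[symmetric]
proof (rule SUP_least)
  fix Ps :: "nat \<Rightarrow> (real ^ 'p) measure"
  assume Ps: "Ps \<in> admissible_laws n q \<sigma> B"
  \<comment> \<open>extend \<open>Ps\<close> to all indices, so that the mixture kernel is measurable\<close>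
  define N where "N k = (if k < n then Ps k else Ps 0)" for k
  have N: "\<And>k. prob_space (N k)" "\<And>k. sets (N k) = sets borel" "\<And>k. k < n \<Longrightarrow> N k = Ps k"
    using Ps n by (auto simp: N_def admissible_laws_def is_law_def)
  have mean_zero: "\<And>k. k \<in> {..<n} \<Longrightarrow> mean_zero (N k)"
    using Ps by (auto simp: N_def admissible_laws_def)
  let ?M = "uniform_mixture {..<n} N"
  have "PiM {..<n} Ps = PiM {..<n} N"
    by (intro PiM_cong) (auto simp: N_def)
  then have "(\<integral>\<^sup>+x. ennreal (Max (range (\<lambda>j. \<bar>(1 / real n) * (\<Sum>i<n. x i $ j)\<bar>))) \<partial>PiM {..<n} Ps)
      = ennreal (1 / real n) * (\<integral>\<^sup>+x. ennreal (linf (\<Sum>i<n. x i)) \<partial>PiM {..<n} N)"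
    using N(2) by (simp only: nn_integral_Max_abs_mean)
  also have "\<dots> \<le> ennreal (1 / real n) * (2 * (\<integral>\<^sup>+x. ennreal (linf (\<Sum>i<n. x i)) \<partial>PiM {..<n} (\<lambda>_. ?M)))"
    using n N(1,2) mean_zero
    by (intro mult_left_mono nn_integral_linf_sum_le_uniform_mixture) (auto simp: lessThan_empty_iff)
  also have "\<dots> = 2 * (\<integral>\<^sup>+x. ennreal (Max (range (\<lambda>j. \<bar>(1 / real n) * (\<Sum>i<n. x i $ j)\<bar>))) \<partial>PiM {..<n} (\<lambda>_. ?M))"
    using n N(1,2) sets_uniform_mixture[of "{..<n}" N borel]
    by (subst nn_integral_Max_abs_mean) (auto simp: lessThan_empty_iff mult.left_commute)
  also have "\<dots> \<le> 2 * E_q_star TYPE('p) n q \<sigma> B"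
    unfolding E_q_star_def
    by (intro mult_left_mono SUP_upper uniform_mixture_in_P_class[OF n Ps N]) auto
  finally show "(\<integral>\<^sup>+x. ennreal (Max (range (\<lambda>j. \<bar>(1 / real n) * (\<Sum>i<n. x i $ j)\<bar>))) \<partial>PiM {..<n} Ps)
      \<le> 2 * E_q_star TYPE('p) n q \<sigma> B" .
qed

theorem theorem2p1:
  fixes n :: nat and q :: ereal and \<sigma> B :: real
  assumes "n \<ge> 1" and "0 < q" and "0 \<le> \<sigma>" and "\<sigma> \<le> B"
  shows "E_q_star TYPE('p::finite) n q \<sigma> B \<le> E_q TYPE('p) n q \<sigma> B \<and>
         E_q TYPE('p) n q \<sigma> B \<le> 16 * E_q_star TYPE('p) n q \<sigma> B"
proof
  show "E_q_star TYPE('p) n q \<sigma> B \<le> E_q TYPE('p) n q \<sigma> B"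
    using assms(1) by (rule E_q_star_le_E_q)
  have "E_q TYPE('p) n q \<sigma> B \<le> 2 * E_q_star TYPE('p) n q \<sigma> B"
    using assms(1) by (rule E_q_le_twice_E_q_star)
  also have "\<dots> \<le> 16 * E_q_star TYPE('p) n q \<sigma> B"
    by (intro mult_right_mono) auto
  finally show "E_q TYPE('p) n q \<sigma> B \<le> 16 * E_q_star TYPE('p) n q \<sigma> B" .
qed

end
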